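(* Let $\Bbbk$ be a field, $S=\Bbbk[x,y,z]$, $\mathfrak m=(x,y,z)$, and let $I\subseteq S$ be a monomial ideal generated in degree $d$. Then $I$ has a bad configuration in $\Delta(d)$ if and only if the socle $0:_{S/I}\mathfrak m$ of $S/I$ contains (the image of) a monomial of degree at least $d$.
   Context: For a monomial $f\in S$, its $d$-shadow is the set of all monomials of degree $d$ dividing $f$. Let $\mathcal G(I)$ denote the minimal monomial generating set of $I$. $I$ (generated in degree $d$) is said to have a bad configuration in $\Delta(d)$ if there exists a nonempty set $M$ of degree-$d$ monomials not belonging to $I$ such that (i) $M$ is the $d$-shadow of some monomial $f\in S$, and (ii) each of the $d$-shadows of $fx$, $fy$ and $fz$ has nonempty intersection with $\mathcal G(I)$. Here $\Delta(d)$ denotes the dual graph of $\mathfrak m^d$ (vertices: degree-$d$ monomials). *)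

theory Defs
  imports Main "HOL-Library.Poly_Mapping" "HOL-Library.Product_Plus"
begin

text \<open>Monomials of S = k[x,y,z] are exponent triples (a,b,c) standing for x^a y^b z^c;
  the polynomial ring S is the ring of finitely supported functions from
  monomials to the field k (convolution product), i.e. (nat*nat*nat) =>0 'k.\<close>

type_synonym mon = "nat \<times> nat \<times> nat"
type_synonym 'k mpoly3 = "mon \<Rightarrow>\<^sub>0 'k"

definition mdeg :: "mon \<Rightarrow> nat" where
  "mdeg m = fst m + fst (snd m) + snd (snd m)"

definition monom :: "mon \<Rightarrow> 'k::field mpoly3" where
  "monom m = Poly_Mapping.single m 1"

definition varX :: mon where "varX = (1, 0, 0)"
definition varY :: mon where "varY = (0, 1, 0)"
definition varZ :: mon where "varZ = (0, 0, 1)"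

definition ideal_gen :: "'k::field mpoly3 set \<Rightarrow> 'k mpoly3 set" where
  "ideal_gen G = {p. \<exists>F r. finite F \<and> F \<subseteq> G \<and> p = (\<Sum>g\<in>F. r g * g)}"

definition max_ideal :: "'k::field mpoly3 set" where
  "max_ideal = ideal_gen {monom varX, monom varY, monom varZ}"

definition monomial_ideal_gen_in_degree :: "nat \<Rightarrow> 'k::field mpoly3 set \<Rightarrow> bool" where
  "monomial_ideal_gen_in_degree d I \<longleftrightarrow>
     (\<exists>G. (\<forall>m\<in>G. mdeg m = d) \<and> I = ideal_gen (monom ` G))"

definition min_mon_gens :: "'k::field mpoly3 set \<Rightarrow> mon set" where
  "min_mon_gens I = {m. monom m \<in> I \<and>
      (\<forall>m'. monom m' \<in> I \<and> (monom m' :: 'k mpoly3) dvd monom m \<longrightarrow> m' = m)}"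

definition shadow :: "'k::field itself \<Rightarrow> nat \<Rightarrow> mon \<Rightarrow> mon set" where
  "shadow _ d f = {m. mdeg m = d \<and> (monom m :: 'k mpoly3) dvd monom f}"

definition bad_configuration :: "nat \<Rightarrow> 'k::field mpoly3 set \<Rightarrow> bool" where
  "bad_configuration d I \<longleftrightarrow>
     (\<exists>M. M \<noteq> {} \<and> (\<forall>m\<in>M. mdeg m = d \<and> monom m \<notin> I) \<and>
        (\<exists>f. M = shadow TYPE('k) d f \<and>
             shadow TYPE('k) d (f + varX) \<inter> min_mon_gens I \<noteq> {} \<and>
             shadow TYPE('k) d (f + varY) \<inter> min_mon_gens I \<noteq> {} \<and>
             shadow TYPE('k) d (f + varZ) \<inter> min_mon_gens I \<noteq> {}))"

definition in_socle :: "'k::field mpoly3 set \<Rightarrow> 'k mpoly3 \<Rightarrow> bool" where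
  "in_socle I u \<longleftrightarrow> (\<forall>p\<in>max_ideal. u * p \<in> I)"

end

theory Submission
  imports Defs HOL.Modules "HOL-Library.Product_Order"
begin

text \<open>If I is generated by a set G of degree-d monomials, then G is the minimal monomial
  generating set of I, and the d-shadow of a monomial h meets G exactly when h lies in I.
  So the conditions on f x, f y, f z say that x f, y f, z f lie in I, i.e. that f is in the
  socle; and the d-shadow of f is a nonempty set of monomials outside I exactly when
  deg f \<ge> d and f \<notin> I, since a generator dividing f lies in that shadow.\<close>

interpretation ring_module: module "(*) :: 'a::comm_ring_1 \<Rightarrow> 'a \<Rightarrow> 'a"
  by standard (simp_all add: algebra_simps)

lemma ideal_gen_eq_span: "ideal_gen G = ring_module.span G"
  unfolding ideal_gen_def ring_module.span_explicit by blast

lemma mult_span_subset_span_iff: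
  fixes u :: "'a::comm_ring_1"
  shows "(\<forall>p\<in>ring_module.span B. u * p \<in> ring_module.span S) \<longleftrightarrow>
         (\<forall>b\<in>B. u * b \<in> ring_module.span S)"
proof (intro iffI ballI)
  fix p assume gens: "\<forall>b\<in>B. u * b \<in> ring_module.span S"
  assume "p \<in> ring_module.span B"
  then show "u * p \<in> ring_module.span S"
  proof (induction rule: ring_module.span_induct_alt)
    case base
    show ?case by (simp add: ring_module.span_zero)
  next
    case (step c b q)
    have "u * b \<in> ring_module.span S" using step.hyps gens by blast
    then have "c * (u * b) \<in> ring_module.span S" by (rule ring_module.span_scale)
    then have "c * (u * b) + u * q \<in> ring_module.span S"
      using step.IH by (rule ring_module.span_add)
    moreover have "u * (c * b + q) = c * (u * b) + u * q"
      by (simp add: distrib_left mult.left_commute)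
    ultimately show ?case by simp
  qed
qed (simp add: ring_module.span_base)

lemma monom_mult: "(monom a :: 'k::field mpoly3) * monom b = monom (a + b)"
  by (simp add: monom_def mult_single)

lemma mon_le_iff_add: "(m::mon) \<le> f \<longleftrightarrow> (\<exists>c. f = m + c)"
proof
  assume "m \<le> f"
  then have "f = m + (f - m)"
    by (cases m; cases f) (simp add: less_eq_prod_def)
  then show "\<exists>c. f = m + c" ..
qed (auto simp: less_eq_prod_def)

lemma mdeg_add: "mdeg (a + b) = mdeg a + mdeg b"
  by (cases a; cases b) (simp add: mdeg_def)

lemma mdeg_mono: "(m::mon) \<le> f \<Longrightarrow> mdeg m \<le> mdeg f"
  by (auto simp: mon_le_iff_add mdeg_add)

lemma mon_le_antisym_mdeg: "(m::mon) \<le> f \<Longrightarrow> mdeg m = mdeg f \<Longrightarrow> m = f"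
  by (cases m; cases f) (simp add: less_eq_prod_def mdeg_def)

lemma exists_mon_le_mdeg_eq:
  assumes "d \<le> mdeg u"
  shows "\<exists>m. mdeg m = d \<and> m \<le> u"
proof -
  obtain a b c where u: "u = (a, b, c)" by (cases u)
  define a' where "a' = min a d"
  define b' where "b' = min b (d - a')"
  have "mdeg (a', b', d - a' - b') = d" "(a', b', d - a' - b') \<le> u"
    using assms by (auto simp: a'_def b'_def u mdeg_def)
  then show ?thesis by blast
qed

lemma lookup_mult_monom_nonzero_imp_le:
  fixes q :: "'k::field mpoly3"
  assumes "Poly_Mapping.lookup (q * monom g) u \<noteq> 0"
  shows "g \<le> u"
proof -
  have "u \<in> Poly_Mapping.keys (q * monom g)"
    using assms by (simp add: in_keys_iff)
  then have "\<exists>a. u = a + g"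
    using keys_mult[of q "monom g"] by (auto simp: monom_def)
  then show ?thesis by (auto simp: mon_le_iff_add add.commute)
qed

lemma monom_dvd_monom_iff: "(monom m :: 'k::field mpoly3) dvd monom f \<longleftrightarrow> m \<le> f"
proof
  assume "(monom m :: 'k mpoly3) dvd monom f"
  then obtain q :: "'k mpoly3" where "monom f = q * monom m"
    by (auto simp: mult.commute elim: dvdE)
  then have "Poly_Mapping.lookup (q * monom m) f \<noteq> 0"
    by (metis lookup_single_eq monom_def one_neq_zero)
  then show "m \<le> f" by (rule lookup_mult_monom_nonzero_imp_le)
next
  assume "m \<le> f"
  then obtain c where "f = m + c" by (auto simp: mon_le_iff_add)
  then show "(monom m :: 'k mpoly3) dvd monom f" by (simp add: monom_mult[symmetric])
qed

lemma monom_mem_ideal_gen_iff: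
  "(monom u :: 'k::field mpoly3) \<in> ideal_gen (monom ` G) \<longleftrightarrow> (\<exists>g\<in>G. g \<le> u)"
proof
  assume "(monom u :: 'k mpoly3) \<in> ideal_gen (monom ` G)"
  then have "Poly_Mapping.lookup (monom u :: 'k mpoly3) u \<noteq> 0 \<longrightarrow> (\<exists>g\<in>G. g \<le> u)"
    unfolding ideal_gen_eq_span
  proof (induction rule: ring_module.span_induct_alt)
    case base
    show ?case by simp
  next
    case (step c p q)
    then obtain g where "g \<in> G" "p = monom g" by blast
    then show ?case
      using step.IH lookup_mult_monom_nonzero_imp_le[of c g u] by (auto simp: lookup_add)
  qed
  then show "\<exists>g\<in>G. g \<le> u" by (simp add: monom_def)
next
  assume "\<exists>g\<in>G. g \<le> u"
  then obtain g where g: "g \<in> G" and "g \<le> u" ..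
  from \<open>g \<le> u\<close> obtain c where u: "u = g + c" unfolding mon_le_iff_add ..
  have "monom c * monom g \<in> ring_module.span (monom ` G :: 'k mpoly3 set)"
    using g by (intro ring_module.span_scale ring_module.span_base) simp
  then show "(monom u :: 'k mpoly3) \<in> ideal_gen (monom ` G)"
    unfolding ideal_gen_eq_span u by (simp add: monom_mult add.commute)
qed

lemma in_socle_ideal_gen_iff:
  "in_socle (ideal_gen H) u \<longleftrightarrow> (\<forall>v\<in>{varX, varY, varZ}. u * monom v \<in> ideal_gen H)"
proof -
  have max_ideal: "max_ideal = ring_module.span (monom ` {varX, varY, varZ})"
    unfolding max_ideal_def ideal_gen_eq_span by simp
  show ?thesis
    unfolding in_socle_def max_ideal ideal_gen_eq_span mult_span_subset_span_iff by simp
qed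

lemma min_mon_gens_ideal_gen:
  assumes deg: "\<forall>g\<in>G. mdeg g = d"
  shows "min_mon_gens (ideal_gen (monom ` G) :: 'k::field mpoly3 set) = G"
    (is "min_mon_gens ?I = G")
proof (intro equalityI subsetI)
  fix m assume "m \<in> min_mon_gens ?I"
  then have m: "monom m \<in> ?I" and minimal: "\<And>m'. monom m' \<in> ?I \<Longrightarrow> m' \<le> m \<Longrightarrow> m' = m"
    unfolding min_mon_gens_def monom_dvd_monom_iff by blast+
  obtain g where g: "g \<in> G" "g \<le> m"
    using m unfolding monom_mem_ideal_gen_iff by blast
  have "monom g \<in> ?I"
    using g(1) order_refl unfolding monom_mem_ideal_gen_iff by blast
  with g show "m \<in> G" using minimal by blast
next
  fix g assume g: "g \<in> G"
  have "monom g \<in> ?I"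
    using g order_refl unfolding monom_mem_ideal_gen_iff by blast
  moreover have "m' = g" if mem: "monom m' \<in> ?I" and "m' \<le> g" for m'
  proof -
    obtain g' where "g' \<in> G" "g' \<le> m'"
      using mem unfolding monom_mem_ideal_gen_iff by blast
    have "g' \<le> g" using \<open>g' \<le> m'\<close> \<open>m' \<le> g\<close> by (rule order_trans)
    moreover have "mdeg g' = mdeg g" using deg \<open>g' \<in> G\<close> g by simp
    ultimately have "g' = g" by (rule mon_le_antisym_mdeg)
    with \<open>g' \<le> m'\<close> \<open>m' \<le> g\<close> show "m' = g" by simp
  qed
  ultimately show "g \<in> min_mon_gens ?I"
    unfolding min_mon_gens_def monom_dvd_monom_iff by blast
qed

lemma mem_shadow_iff: "m \<in> shadow TYPE('k::field) d f \<longleftrightarrow> mdeg m = d \<and> m \<le> f"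
  by (simp add: shadow_def monom_dvd_monom_iff)

lemma mdeg_shadow: "m \<in> shadow TYPE('k::field) d f \<Longrightarrow> mdeg m = d"
  by (simp add: shadow_def)

lemma shadow_nonempty_iff: "shadow TYPE('k::field) d f \<noteq> {} \<longleftrightarrow> d \<le> mdeg f"
proof
  assume "shadow TYPE('k) d f \<noteq> {}"
  then obtain m where "m \<in> shadow TYPE('k) d f" by blast
  then have "mdeg m = d" "m \<le> f" by (simp_all add: mem_shadow_iff)
  then show "d \<le> mdeg f" using mdeg_mono by blast
next
  assume "d \<le> mdeg f"
  then obtain m where "mdeg m = d" "m \<le> f"
    using exists_mon_le_mdeg_eq by blast
  then have "m \<in> shadow TYPE('k) d f" by (simp add: mem_shadow_iff)
  then show "shadow TYPE('k) d f \<noteq> {}" by blast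
qed

lemma shadow_meets_gens_iff:
  assumes deg: "\<forall>g\<in>G. mdeg g = d"
  shows "shadow TYPE('k::field) d f \<inter> G \<noteq> {} \<longleftrightarrow>
         (monom f :: 'k mpoly3) \<in> ideal_gen (monom ` G)"
proof
  assume "shadow TYPE('k) d f \<inter> G \<noteq> {}"
  then obtain g where "g \<in> G" "g \<in> shadow TYPE('k) d f" by blast
  then have "g \<in> G" "g \<le> f" by (simp_all add: mem_shadow_iff)
  then show "(monom f :: 'k mpoly3) \<in> ideal_gen (monom ` G)"
    unfolding monom_mem_ideal_gen_iff by blast
next
  assume "(monom f :: 'k mpoly3) \<in> ideal_gen (monom ` G)"
  then obtain g where "g \<in> G" "g \<le> f"
    unfolding monom_mem_ideal_gen_iff by blast
  moreover have "mdeg g = d" using deg \<open>g \<in> G\<close> by blast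
  ultimately have "g \<in> shadow TYPE('k) d f \<inter> G" by (simp add: mem_shadow_iff)
  then show "shadow TYPE('k) d f \<inter> G \<noteq> {}" by blast
qed

lemma shadow_avoids_ideal_iff:
  assumes "\<forall>g\<in>G. mdeg g = d"
  shows "(\<forall>m\<in>shadow TYPE('k::field) d f. (monom m :: 'k mpoly3) \<notin> ideal_gen (monom ` G)) \<longleftrightarrow>
         (monom f :: 'k mpoly3) \<notin> ideal_gen (monom ` G)"
  unfolding monom_mem_ideal_gen_iff using assms mem_shadow_iff order_trans order_refl by blast

theorem mainTheorem3:
  fixes I :: "'k::field mpoly3 set" and d :: nat
  assumes "monomial_ideal_gen_in_degree d I"
  shows "bad_configuration d I \<longleftrightarrow>
         (\<exists>u. mdeg u \<ge> d \<and> monom u \<notin> I \<and> in_socle I (monom u))"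
proof -
  obtain G where deg: "\<forall>g\<in>G. mdeg g = d" and I: "I = ideal_gen (monom ` G)"
    using assms unfolding monomial_ideal_gen_in_degree_def by blast
  have "bad_configuration d I \<longleftrightarrow>
      (\<exists>f. shadow TYPE('k) d f \<noteq> {} \<and> (\<forall>m\<in>shadow TYPE('k) d f. monom m \<notin> I) \<and>
           shadow TYPE('k) d (f + varX) \<inter> G \<noteq> {} \<and> shadow TYPE('k) d (f + varY) \<inter> G \<noteq> {} \<and>
           shadow TYPE('k) d (f + varZ) \<inter> G \<noteq> {})"
    unfolding bad_configuration_def I min_mon_gens_ideal_gen[OF deg]
    by (blast dest: mdeg_shadow)
  also have "\<dots> \<longleftrightarrow> (\<exists>f. d \<le> mdeg f \<and> monom f \<notin> I \<and>
      monom (f + varX) \<in> I \<and> monom (f + varY) \<in> I \<and> monom (f + varZ) \<in> I)"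
    unfolding I shadow_nonempty_iff shadow_avoids_ideal_iff[OF deg] shadow_meets_gens_iff[OF deg] ..
  also have "\<dots> \<longleftrightarrow> (\<exists>u. mdeg u \<ge> d \<and> monom u \<notin> I \<and> in_socle I (monom u))"
    unfolding I in_socle_ideal_gen_iff by (simp add: monom_mult)
  finally show ?thesis .
qed

end
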